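(* Let $p$ be an odd prime and $G$ a finite non-abelian $2$-generated $p$-group with cyclic $G'$, with parameters $m,o_1,o_2,r_1,r_2$ as in the context. Let $\delta_1,\delta_2$ be the unique integers with $1\le\delta_1\le p^{o_1}$, $1\le\delta_2\le p^{o_2}$ such that $\mathcal{S}_{r_2}(\delta_1p^{m-o_1})\equiv 1-r_1\bmod p^m$ and $\mathcal{S}_{r_1}(\delta_2p^{m-o_2})\,r_2^{\delta_1p^{m-o_1}}\equiv r_2-1\bmod p^m$. Then $\delta_1=\delta_2=1$ if $o_1=0$, and $\delta_1+\delta_2\equiv 0\bmod p^{o_2}$ otherwise.
   Context: $\mathcal{S}_s(n)=\sum_{i=0}^{n-1}s^i$. Let $|G'|=p^m$, $G/G'\cong C_{p^{n_1}}\times C_{p^{n_2}}$, $n_1\ge n_2\ge1$. A basis is a pair $(b_1,b_2)$ with $G/G'=\langle b_1G'\rangle\times\langle b_2G'\rangle$ and $|b_iG'|=p^{n_i}$. For $g\in G$, $p^{o(g)}=|g{\rm C}_G(G')|$. $(o_1,o_2)=\min_{\mathrm{lex}}\{(o(b_1),o(b_2)):(b_1,b_2)\text{ a basis}\}$; $r_1=1+p^{m-o_1}$; $r_2=1+p^{m-o_2}$ if $o_2>o_1$, else $r_2=r_1^{p^{o_1-o_2}}$. *)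

theory Defs
  imports "HOL-Algebra.Algebra" "HOL-Number_Theory.Cong"
begin

abbreviation comm_sub :: "('a, 'b) monoid_scheme \<Rightarrow> 'a set" where
  "comm_sub G \<equiv> derived G (carrier G)"

definition centralizer :: "('a, 'b) monoid_scheme \<Rightarrow> 'a set \<Rightarrow> 'a set" where
  "centralizer G H = {g \<in> carrier G. \<forall>h\<in>H. g \<otimes>\<^bsub>G\<^esub> h = h \<otimes>\<^bsub>G\<^esub> g}"

definition S_sum :: "int \<Rightarrow> nat \<Rightarrow> int" where
  "S_sum s n = (\<Sum>i<n. s ^ i)"

definition is_basis :: "('a, 'b) monoid_scheme \<Rightarrow> nat \<Rightarrow> nat \<Rightarrow> nat \<Rightarrow> 'a \<Rightarrow> 'a \<Rightarrow> bool" where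
  "is_basis G p n1 n2 b1 b2 \<longleftrightarrow>
     (let Q = G Mod (comm_sub G); x = comm_sub G #>\<^bsub>G\<^esub> b1; y = comm_sub G #>\<^bsub>G\<^esub> b2 in
      b1 \<in> carrier G \<and> b2 \<in> carrier G \<and>
      generate Q {x, y} = carrier Q \<and>
      generate Q {x} \<inter> generate Q {y} = {\<one>\<^bsub>Q\<^esub>} \<and>
      group.ord Q x = p ^ n1 \<and> group.ord Q y = p ^ n2)"

definition o_exp :: "('a, 'b) monoid_scheme \<Rightarrow> nat \<Rightarrow> 'a \<Rightarrow> nat" where
  "o_exp G p g = (THE k. p ^ k =
      group.ord (G Mod (centralizer G (comm_sub G))) (centralizer G (comm_sub G) #>\<^bsub>G\<^esub> g))"

end

theory Submission
  imports Defs "HOL-Number_Theory.Pocklington"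
begin

(* Conjugation by g acts on the cyclic group G' = <c> of order p^m as c |-> c^e, where e = 1 mod p
   because G is a p-group, and p^o(g) is the multiplicative order of e modulo p^m. Everything rests
   on the valuation identity v_p(S_r(n)) = v_p(n) for r = 1 mod p and p odd (lifting the exponent).
   It makes the units = 1 mod p cyclic modulo p^m, so if 0 < o1 < o2 the exponent of b1 is inverted
   by a power of that of b2: some b1 b2^k centralizes G' and the basis (b1 b2^k, b2) beats the
   minimal one; hence o2 <= o1 whenever o1 > 0. It also turns the two congruences into divisibility
   statements: for o1 = 0 they reduce to delta2 p^(m-o2) = p^(m-o2) mod p^m, and for o1 > 0, where
   r2 = r1^(p^(o1-o2)), the rule S_r(a + b) = S_r(a) + r^a S_r(b) combines them into
   p^m | S_r1((delta1 + delta2) p^(m-o2)). *)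

lemma S_sum_0 [simp]: "S_sum z 0 = 0"
  by (simp add: S_sum_def)

lemma S_sum_Suc: "S_sum z (Suc n) = S_sum z n + z ^ n"
  by (simp add: S_sum_def)

lemma S_sum_geometric: "(z - 1) * S_sum z n = z ^ n - 1"
  unfolding S_sum_def using power_diff_1_eq[of z n] by simp

lemma S_sum_add: "S_sum z (a + b) = S_sum z a + z ^ a * S_sum z b"
  by (induction b) (simp_all add: S_sum_Suc algebra_simps power_add)

lemma S_sum_mult: "S_sum z (a * b) = S_sum z a * S_sum (z ^ a) b"
proof (induction b)
  case (Suc b)
  have "S_sum z (a * Suc b) = S_sum z (a * b) + z ^ (a * b) * S_sum z a"
    using S_sum_add[of z "a * b" a] by (simp add: add.commute)
  then show ?case
    using Suc by (simp add: S_sum_Suc algebra_simps power_mult)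
qed simp

lemma S_sum_cong_of_cong_1:
  assumes "[z = 1] (mod q)"
  shows "[S_sum z n = int n] (mod q)"
proof -
  have "[(\<Sum>i<n. z ^ i) = (\<Sum>i<n. 1)] (mod q)"
    using cong_pow[OF assms] by (intro cong_sum) simp
  then show ?thesis
    by (simp add: S_sum_def)
qed

lemma one_plus_mult_power_cong: "[(1 + t * q) ^ n = 1 + int n * t * q] (mod q\<^sup>2)"
proof (induction n)
  case (Suc n)
  have "[(1 + t * q) ^ Suc n = (1 + int n * t * q) * (1 + t * q)] (mod q\<^sup>2)"
    unfolding power_Suc2 by (rule cong_scalar_right[OF Suc.IH])
  moreover have "(1 + int n * t * q) * (1 + t * q) = 1 + int (Suc n) * t * q + (int n * t * t) * q\<^sup>2"
    by (simp add: algebra_simps power2_eq_square)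
  moreover have "[1 + int (Suc n) * t * q + (int n * t * t) * q\<^sup>2 = 1 + int (Suc n) * t * q] (mod q\<^sup>2)"
    by (simp add: cong_iff_dvd_diff)
  ultimately show ?case
    by (auto intro: cong_trans)
qed simp

lemma S_sum_prime_cong:
  fixes p :: nat
  assumes "Factorial_Ring.prime p" "odd p" and "[z = 1] (mod int p)"
  shows "[S_sum z p = int p] (mod int p ^ 2)"
proof -
  obtain t where z: "z = 1 + t * int p"
    using assms(3) unfolding cong_iff_dvd_diff by (metis dvd_div_mult_self diff_add_cancel add.commute)
  obtain h where h: "p = 2 * h + 1"
    using assms(2) oddE by blast
  have "[S_sum z p = (\<Sum>i<p. 1 + int i * t * int p)] (mod int p ^ 2)"
    unfolding S_sum_def z by (intro cong_sum one_plus_mult_power_cong)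
  also have "(\<Sum>i<p. 1 + int i * t * int p) = int p + (t * int h) * int p ^ 2"
  proof -
    have "2 * (\<Sum>i<n. int i) = int n * (int n - 1)" for n
      by (induction n) (simp_all add: algebra_simps)
    from this[of p] have "(\<Sum>i<p. int i) = int p * int h"
      using h by simp
    moreover have "(\<Sum>i<p. 1 + int i * t * int p) = int p + (\<Sum>i<p. int i) * t * int p"
      by (simp add: sum.distrib sum_distrib_right)
    ultimately show ?thesis
      by (simp add: algebra_simps power2_eq_square)
  qed
  also have "[int p + (t * int h) * int p ^ 2 = int p] (mod int p ^ 2)"
    by (simp add: cong_iff_dvd_diff)
  finally show ?thesis .
qed

lemma S_sum_prime_eq_prime_mult:
  fixes p :: nat
  assumes "Factorial_Ring.prime p" "odd p" and "[z = 1] (mod int p)"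
  obtains u where "S_sum z p = int p * u" and "\<not> int p dvd u"
proof -
  have "int p ^ 2 dvd S_sum z p - int p"
    using S_sum_prime_cong[OF assms] by (simp add: cong_iff_dvd_diff)
  then obtain v where v: "S_sum z p = int p * (1 + int p * v)"
    by (auto simp: power2_eq_square algebra_simps dvd_def eq_diff_eq)
  have "\<not> int p dvd 1 + int p * v"
    using assms(1) by (metis dvd_add_times_triv_right_iff mult.commute of_nat_1 of_nat_dvd_iff
        nat_dvd_1_iff_1 not_prime_1)
  with v that show ?thesis by blast
qed

lemma S_sum_prime_power_dvd_iff:
  fixes p :: nat
  assumes p: "Factorial_Ring.prime p" "odd p" and "[z = 1] (mod int p)"
  shows "int p ^ j dvd S_sum z n \<longleftrightarrow> p ^ j dvd n"
  using assms(3)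
proof (induction j arbitrary: z n)
  case (Suc j)
  obtain u where u: "S_sum z p = int p * u" "\<not> int p dvd u"
    using S_sum_prime_eq_prime_mult[OF p Suc.prems] .
  have "coprime (int p ^ j) u"
    using u(2) p(1) by (simp add: prime_imp_coprime)
  have zp: "[z ^ p = 1] (mod int p)"
    using cong_pow[OF Suc.prems, of p] by simp
  have p_dvd_iff: "int p dvd S_sum z n \<longleftrightarrow> p dvd n"
    using S_sum_cong_of_cong_1[OF Suc.prems, of n] by (metis cong_dvd_iff of_nat_dvd_iff)
  have multiple_iff: "int p ^ Suc j dvd S_sum z (p * k) \<longleftrightarrow> p ^ Suc j dvd p * k" for k
  proof -
    have "int p ^ Suc j dvd S_sum z (p * k) \<longleftrightarrow> int p ^ j dvd u * S_sum (z ^ p) k"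
      using p(1) prime_gt_0_nat by (simp add: S_sum_mult u(1) mult.assoc)
    also have "\<dots> \<longleftrightarrow> p ^ j dvd k"
      using \<open>coprime (int p ^ j) u\<close> Suc.IH[OF zp] by (simp add: coprime_dvd_mult_right_iff)
    also have "\<dots> \<longleftrightarrow> p ^ Suc j dvd p * k"
      using p(1) prime_gt_0_nat by simp
    finally show ?thesis .
  qed
  show ?case
  proof (cases "p dvd n")
    case True
    then obtain k where "n = p * k" ..
    then show ?thesis
      using multiple_iff by simp
  next
    case False
    have "int p dvd int p ^ Suc j" "p dvd p ^ Suc j"
      by simp_all
    with False show ?thesis
      using p_dvd_iff by (meson dvd_trans)
  qed
qed simp

lemma prime_power_dvd_power_prime_power_minus_1_iff:
  fixes p :: nat
  assumes p: "Factorial_Ring.prime p" "odd p" and z: "[z = 1] (mod int p)"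
  shows "int p ^ (j + a) dvd z ^ (p ^ a) - 1 \<longleftrightarrow> int p ^ j dvd z - 1"
proof -
  have "int p ^ a dvd S_sum z (p ^ a)"
    using S_sum_prime_power_dvd_iff[OF p z] by simp
  then obtain u where u: "S_sum z (p ^ a) = int p ^ a * u" ..
  have "\<not> p ^ Suc a dvd p ^ a"
    using nat_dvd_not_less[of "p ^ a" "p ^ Suc a"] prime_gt_1_nat[OF p(1)] by simp
  then have "\<not> int p ^ Suc a dvd S_sum z (p ^ a)"
    using S_sum_prime_power_dvd_iff[OF p z, of "Suc a" "p ^ a"] by blast
  then have "\<not> int p dvd u"
    using u by (metis mult_dvd_mono dvd_refl power_Suc2)
  then have "coprime (int p ^ j) u"
    using p(1) by (simp add: prime_imp_coprime)
  have "z ^ (p ^ a) - 1 = (z - 1) * u * int p ^ a"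
    using S_sum_geometric[of z "p ^ a"] u by (simp add: mult_ac)
  moreover have "int p ^ (j + a) = int p ^ j * int p ^ a"
    by (simp add: power_add)
  moreover have "p \<noteq> 0"
    using p(1) by auto
  ultimately have "int p ^ (j + a) dvd z ^ (p ^ a) - 1 \<longleftrightarrow> int p ^ j dvd (z - 1) * u"
    by simp
  also have "\<dots> \<longleftrightarrow> int p ^ j dvd z - 1"
    using \<open>coprime (int p ^ j) u\<close> by (simp add: coprime_dvd_mult_left_iff)
  finally show ?thesis .
qed

lemma power_prime_power_cong_1_iff:
  fixes p z :: nat
  assumes "Factorial_Ring.prime p" "odd p" and "[z = 1] (mod p)"
  shows "[z ^ (p ^ a) = 1] (mod p ^ (j + a)) \<longleftrightarrow> [z = 1] (mod p ^ j)"
proof -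
  have "[int z = 1] (mod int p)"
    using assms(3) by (simp flip: cong_int_iff)
  then show ?thesis
    using prime_power_dvd_power_prime_power_minus_1_iff[OF assms(1,2), of "int z" j a]
    by (simp flip: cong_int_iff add: cong_iff_dvd_diff)
qed

lemma ord_prime_power_dvd:
  fixes p z :: nat
  assumes "Factorial_Ring.prime p" "odd p" and "[z = 1] (mod p)"
  shows "ord (p ^ m) z dvd p ^ (m - 1)"
proof (cases m)
  case (Suc k)
  have "[z ^ (p ^ k) = 1] (mod p ^ (1 + k))"
    using power_prime_power_cong_1_iff[OF assms, of k 1] assms(3) by simp
  then show ?thesis
    unfolding ord_divides[symmetric] using Suc by simp
qed simp

lemma cong_1_of_power_prime_power_cong_1:
  fixes p e :: nat
  assumes p: "Factorial_Ring.prime p" and e: "[e ^ (p ^ k) = 1] (mod p)"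
  shows "[e = 1] (mod p)"
proof -
  have ord_dvd: "ord p e dvd p ^ k"
    using e by (simp only: ord_divides)
  then have "coprime p e"
    using p by (metis ord_eq_0 dvd_0_left_iff power_eq_0_iff not_prime_0)
  then have "\<not> p dvd e"
    using p by (metis coprime_absorb_left not_prime_unit)
  then have "ord p e dvd p - 1"
    using fermat_theorem[OF p] by (simp only: ord_divides)
  moreover have "coprime (p ^ k) (p - 1)"
    using coprime_diff_one_right_nat[of p] p prime_gt_0_nat by simp
  ultimately have "ord p e = 1"
    using ord_dvd coprime_common_divisor_nat by blast
  then show ?thesis
    using ord_eq_Suc_0_iff by simp
qed

lemma card_cong_less_mult_le: "card {z. z < d * K \<and> [z = r] (mod d)} \<le> K"
proof -
  let ?T = "{z. z < d * K \<and> [z = r] (mod d)}"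
  have "inj_on (\<lambda>z. z div d) ?T"
  proof (rule inj_onI)
    fix x y
    assume "x \<in> ?T" "y \<in> ?T" and div_eq: "x div d = y div d"
    then have "x mod d = y mod d"
      by (simp add: cong_def)
    with div_eq show "x = y"
      by (metis div_mult_mod_eq)
  qed
  moreover have "(\<lambda>z. z div d) ` ?T \<subseteq> {..<K}"
    by (auto simp: less_mult_imp_div_less mult.commute)
  ultimately show ?thesis
    using card_inj_on_le[of "\<lambda>z. z div d" ?T "{..<K}"] by simp
qed

lemma ord_prime_power_eq_prime_power:
  fixes p z :: nat
  assumes "Factorial_Ring.prime p" "odd p" and "[z = 1] (mod p)"
  obtains a where "ord (p ^ m) z = p ^ a" and "a \<le> m - 1"
proof -
  obtain a where "a \<le> m - 1" "ord (p ^ m) z = p ^ a"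
    using ord_prime_power_dvd[OF assms] divides_primepow_nat[OF assms(1)] by blast
  with that show ?thesis by blast
qed

lemma cong_1_is_power_mod_prime_power:
  fixes p w x :: nat
  assumes p: "Factorial_Ring.prime p" "odd p" and w: "[w = 1] (mod p)"
    and ord_w: "ord (p ^ m) w = p ^ a" and x: "[x = 1] (mod p ^ (m - a))"
  obtains k where "[w ^ k = x] (mod p ^ m)"
proof -
  have "p ^ a dvd p ^ (m - 1)"
    using ord_prime_power_dvd[OF p w, of m] ord_w by simp
  then have "a \<le> m - 1"
    by (rule power_dvd_imp_le[OF _ prime_gt_1_nat[OF p(1)]])
  then have "a \<le> m"
    by simp
  define d K where "d = p ^ (m - a)" and "K = p ^ a"
  have M: "p ^ m = d * K"
    using \<open>a \<le> m\<close> by (simp add: d_def K_def flip: power_add)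
  \<comment> \<open>Counting: the K residues w^k mod p^m with k < K are distinct and all lie in T,
    which has at most K elements.\<close>
  define T where "T = {z. z < d * K \<and> [z = 1] (mod d)}"
  have "coprime (p ^ m) w"
    using cong_imp_coprime[OF cong_sym[OF w]] by (simp add: coprime_commute)
  then have inj: "inj_on (\<lambda>k. w ^ k mod p ^ m) {..<K}"
    using inj_power_mod[of "p ^ m" w] unfolding ord_w K_def by blast
  have powers_in_T: "(\<lambda>k. w ^ k mod p ^ m) ` {..<K} \<subseteq> T"
  proof clarify
    fix k
    have "[w ^ K = 1] (mod p ^ m)"
      using ord_w K_def by (simp only: ord_divides) simp
    moreover have "(w ^ k) ^ (p ^ a) = (w ^ K) ^ k"
      unfolding K_def power_mult[symmetric] by (simp add: mult.commute)
    ultimately have "[(w ^ k) ^ (p ^ a) = 1] (mod p ^ ((m - a) + a))"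
      using \<open>a \<le> m\<close> cong_pow[of "w ^ K" 1 "p ^ m" k] by simp
    then have "[w ^ k = 1] (mod d)"
      using power_prime_power_cong_1_iff[OF p, of "w ^ k" a "m - a"] cong_pow[OF w, of k] d_def by simp
    moreover have "w ^ k mod p ^ m mod d = w ^ k mod d"
      using M by (simp add: mod_mod_cancel)
    moreover have "w ^ k mod p ^ m < d * K"
      using M p(1) prime_gt_0_nat by (metis mod_less_divisor zero_less_power)
    ultimately show "w ^ k mod p ^ m \<in> T"
      by (simp add: T_def cong_def)
  qed
  have "finite T"
    by (rule finite_subset[of T "{..<d * K}"]) (auto simp: T_def)
  moreover have "card T \<le> card ((\<lambda>k. w ^ k mod p ^ m) ` {..<K})"
    using card_cong_less_mult_le[of d K 1] card_image[OF inj] by (simp add: T_def)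
  ultimately have powers_eq_T: "(\<lambda>k. w ^ k mod p ^ m) ` {..<K} = T"
    using card_seteq powers_in_T by blast
  have "x mod p ^ m \<in> T"
  proof -
    have "x mod p ^ m mod d = x mod d"
      using M by (simp add: mod_mod_cancel)
    moreover have "x mod p ^ m < d * K"
      using M p(1) prime_gt_0_nat by (metis mod_less_divisor zero_less_power)
    ultimately show ?thesis
      using x by (simp add: T_def d_def cong_def)
  qed
  then obtain k where "x mod p ^ m = w ^ k mod p ^ m"
    unfolding powers_eq_T[symmetric] by blast
  then show ?thesis
    using that by (simp add: cong_def)
qed

lemma mult_power_cong_1_of_ord_dvd:
  fixes p x y :: nat
  assumes p: "Factorial_Ring.prime p" "odd p" and x: "[x = 1] (mod p)" and y: "[y = 1] (mod p)"
    and ord_dvd: "ord (p ^ m) x dvd ord (p ^ m) y"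
  obtains k where "[x * y ^ k = 1] (mod p ^ m)"
proof -
  obtain a where ord_x: "ord (p ^ m) x = p ^ a" and "a \<le> m - 1"
    using ord_prime_power_eq_prime_power[OF p x] .
  obtain b where ord_y: "ord (p ^ m) y = p ^ b"
    using ord_prime_power_eq_prime_power[OF p y] .
  have "a \<le> b"
    using ord_dvd ord_x ord_y power_dvd_imp_le prime_gt_1_nat[OF p(1)] by metis
  define w where "w = y ^ p ^ (b - a)"
  have "coprime (p ^ m) y"
    using cong_imp_coprime[OF cong_sym[OF y]] by (simp add: coprime_commute)
  have "gcd (p ^ (b - a)) (p ^ b) = p ^ (b - a)"
    by (simp add: le_imp_power_dvd gcd_nat.absorb1)
  then have ord_w: "ord (p ^ m) w = p ^ a"
    using ord_power[OF \<open>coprime (p ^ m) y\<close>, of "p ^ (b - a)"] ord_y \<open>a \<le> b\<close> p(1)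
    by (simp add: w_def power_diff[symmetric])
  define x' where "x' = x ^ (p ^ a - 1)"
  have x_x': "x * x' = x ^ p ^ a"
    using p(1) by (simp add: x'_def prime_gt_0_nat flip: power_Suc)
  have "[x ^ p ^ a = 1] (mod p ^ m)"
    using ord_x by (simp only: ord_divides) simp
  then have "[x' ^ p ^ a = 1] (mod p ^ ((m - a) + a))"
    using \<open>a \<le> m - 1\<close> cong_pow[of "x ^ p ^ a" 1 "p ^ m" "p ^ a - 1"]
    by (simp add: x'_def mult.commute flip: power_mult)
  then have "[x' = 1] (mod p ^ (m - a))"
    using power_prime_power_cong_1_iff[OF p, of x' a "m - a"] cong_pow[OF x] by (simp add: x'_def)
  then obtain k where "[w ^ k = x'] (mod p ^ m)"
    using cong_1_is_power_mod_prime_power[OF p _ ord_w] cong_pow[OF y] w_def by auto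
  then have "[x * y ^ (p ^ (b - a) * k) = x ^ p ^ a] (mod p ^ m)"
    using cong_scalar_left[of "w ^ k" x' "p ^ m" x] x_x' by (simp add: w_def power_mult)
  with \<open>[x ^ p ^ a = 1] (mod p ^ m)\<close> show ?thesis
    using that cong_trans by blast
qed

lemma delta_eq_1_of_S_sum_cong:
  fixes p m j \<delta> :: nat and r :: int
  assumes p: "Factorial_Ring.prime p" "odd p" and "j < m" and "1 \<le> \<delta>" "\<delta> \<le> p ^ j"
    and r: "[r = 1] (mod int p ^ m)"
    and cong: "[S_sum r (\<delta> * p ^ (m - j)) * (1 + int p ^ (m - j)) ^ p ^ m = int p ^ (m - j)]
      (mod int p ^ m)"
  shows "\<delta> = 1"
proof -
  have "[1 + int p ^ (m - j) = 1] (mod int p)"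
    using \<open>j < m\<close> by (simp add: cong_iff_dvd_diff dvd_power)
  then have "int p ^ (0 + m) dvd (1 + int p ^ (m - j)) ^ p ^ m - 1"
    using prime_power_dvd_power_prime_power_minus_1_iff[OF p, of _ 0 m] by simp
  then have "[(1 + int p ^ (m - j)) ^ p ^ m = 1] (mod int p ^ m)"
    by (simp add: cong_iff_dvd_diff)
  with S_sum_cong_of_cong_1[OF r] have "[S_sum r (\<delta> * p ^ (m - j)) * (1 + int p ^ (m - j)) ^ p ^ m
      = int (\<delta> * p ^ (m - j)) * 1] (mod int p ^ m)"
    by (rule cong_mult)
  then have "[int (\<delta> * p ^ (m - j)) = int p ^ (m - j)] (mod int p ^ m)"
    using cong by (simp add: cong_def)
  then have "int p ^ j * int p ^ (m - j) dvd (int \<delta> - 1) * int p ^ (m - j)"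
    using \<open>j < m\<close> by (simp add: cong_iff_dvd_diff algebra_simps flip: power_add)
  then have "int p ^ j dvd int \<delta> - 1"
    using p(1) by simp
  moreover have "int \<delta> \<le> int p ^ j"
    using assms(5) by (metis of_nat_le_iff of_nat_power)
  ultimately show ?thesis
    using assms(4) zdvd_not_zless[of "int \<delta> - 1" "int p ^ j"] by linarith
qed

lemma delta_sum_cong_0_of_S_sum_cong:
  fixes p m i j \<delta>1 \<delta>2 :: nat and r :: int
  assumes p: "Factorial_Ring.prime p" "odd p" and "j \<le> i" "i \<le> m"
    and r: "[r = 1] (mod int p)"
    and cong1: "[S_sum (r ^ p ^ (i - j)) (\<delta>1 * p ^ (m - i)) = 1 - r] (mod int p ^ m)"
    and cong2: "[S_sum r (\<delta>2 * p ^ (m - j)) * (r ^ p ^ (i - j)) ^ (\<delta>1 * p ^ (m - i))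
      = r ^ p ^ (i - j) - 1] (mod int p ^ m)"
  shows "[\<delta>1 + \<delta>2 = 0] (mod p ^ j)"
proof -
  define q N1 N2 where "q = p ^ (i - j)" and "N1 = \<delta>1 * p ^ (m - i)" and "N2 = \<delta>2 * p ^ (m - j)"
  have "S_sum r (q * N1) = S_sum r q * S_sum (r ^ q) N1"
    by (rule S_sum_mult)
  also have "[\<dots> = S_sum r q * (1 - r)] (mod int p ^ m)"
    using cong1 by (simp add: q_def N1_def cong_scalar_left)
  also have "S_sum r q * (1 - r) = - (r ^ q - 1)"
    using S_sum_geometric[of r q] by (simp add: algebra_simps)
  finally have "[S_sum r (q * N1) = - (r ^ q - 1)] (mod int p ^ m)" .
  moreover have "[r ^ (q * N1) * S_sum r N2 = r ^ q - 1] (mod int p ^ m)"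
    using cong2 by (simp add: q_def N1_def N2_def power_mult mult.commute)
  ultimately have "[S_sum r (q * N1) + r ^ (q * N1) * S_sum r N2 = - (r ^ q - 1) + (r ^ q - 1)]
      (mod int p ^ m)"
    by (rule cong_add)
  then have "int p ^ m dvd S_sum r (q * N1 + N2)"
    by (simp add: S_sum_add cong_0_iff)
  then have "p ^ m dvd q * N1 + N2"
    using S_sum_prime_power_dvd_iff[OF p r] by simp
  moreover have "q * N1 + N2 = (\<delta>1 + \<delta>2) * p ^ (m - j)"
    using \<open>j \<le> i\<close> \<open>i \<le> m\<close> by (simp add: q_def N1_def N2_def algebra_simps flip: power_add)
  moreover have "p ^ m = p ^ j * p ^ (m - j)"
    using \<open>j \<le> i\<close> \<open>i \<le> m\<close> by (simp flip: power_add)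
  ultimately show ?thesis
    using p(1) by (simp add: cong_0_iff)
qed

lemma deltas_of_S_sum_congs:
  fixes p m o1 o2 \<delta>1 \<delta>2 :: nat and r1 r2 :: int
  assumes p: "Factorial_Ring.prime p" "odd p"
    and o_bounds: "o1 \<le> m - 1" "o2 \<le> m - 1" "o1 \<noteq> 0 \<Longrightarrow> o2 \<le> o1"
    and r1: "r1 = 1 + int p ^ (m - o1)"
    and r2: "r2 = (if o2 > o1 then 1 + int p ^ (m - o2) else r1 ^ (p ^ (o1 - o2)))"
    and \<delta>_bounds: "1 \<le> \<delta>1" "\<delta>1 \<le> p ^ o1" "1 \<le> \<delta>2" "\<delta>2 \<le> p ^ o2"
    and cong1: "[S_sum r2 (\<delta>1 * p ^ (m - o1)) = 1 - r1] (mod int p ^ m)"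
    and cong2: "[S_sum r1 (\<delta>2 * p ^ (m - o2)) * r2 ^ (\<delta>1 * p ^ (m - o1)) = r2 - 1] (mod int p ^ m)"
  shows "(o1 = 0 \<longrightarrow> \<delta>1 = 1 \<and> \<delta>2 = 1) \<and> (o1 \<noteq> 0 \<longrightarrow> [\<delta>1 + \<delta>2 = 0] (mod p ^ o2))"
proof (cases "o1 = 0")
  case True
  have "\<delta>2 = 1"
  proof (cases "o2 = 0")
    case False
    then have "o2 < m"
      using o_bounds(2) by simp
    moreover have "[r1 = 1] (mod int p ^ m)"
      using r1 True by (simp add: cong_iff_dvd_diff)
    ultimately show ?thesis
      using delta_eq_1_of_S_sum_cong[OF p] r2 \<delta>_bounds cong2 True False by simp
  qed (use \<delta>_bounds in simp)
  then show ?thesis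
    using True \<delta>_bounds by simp
next
  case False
  then have "o2 \<le> o1"
    using o_bounds(3) by blast
  then have r2: "r2 = r1 ^ p ^ (o1 - o2)"
    using r2 by simp
  have "0 < m - o1"
    using False o_bounds(1) by simp
  then have "[r1 = 1] (mod int p)"
    using r1 by (simp add: cong_iff_dvd_diff dvd_power)
  then have "[\<delta>1 + \<delta>2 = 0] (mod p ^ o2)"
    using delta_sum_cong_0_of_S_sum_cong[OF p \<open>o2 \<le> o1\<close> _ _ cong1[unfolded r2] cong2[unfolded r2]]
      \<open>0 < m - o1\<close> by simp
  then show ?thesis
    using False by simp
qed

lemma (in group) generate_mult_nat_pow_eq:
  assumes x: "x \<in> carrier G" and y: "y \<in> carrier G"
  shows "generate G {x \<otimes> y [^] (k::nat), y} = generate G {x, y}"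
proof -
  let ?H = "generate G {x \<otimes> y [^] k, y}" and ?K = "generate G {x, y}"
  have sub_H: "subgroup ?H G" and sub_K: "subgroup ?K G"
    using x y by (auto intro: generate_is_subgroup)
  have gens: "x \<in> ?K" "y \<in> ?K" "x \<otimes> y [^] k \<in> ?H" "y \<in> ?H"
    by (auto intro: generate.incl)
  have "y [^] k \<in> ?K" "y [^] k \<in> ?H"
    using subgroup_int_pow_closed[OF sub_K gens(2), of "int k"]
      subgroup_int_pow_closed[OF sub_H gens(4), of "int k"]
    by (simp_all add: int_pow_int)
  then have "x \<otimes> y [^] k \<in> ?K" "x \<otimes> y [^] k \<otimes> inv (y [^] k) \<in> ?H"
    using gens sub_H sub_K by (simp_all add: subgroup.m_closed subgroup.m_inv_closed)
  moreover have "x \<otimes> y [^] k \<otimes> inv (y [^] k) = x"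
    using x y by (simp add: m_assoc)
  ultimately show ?thesis
    using gens sub_H sub_K x y by (intro equalityI generate_subgroup_incl) auto
qed

context comm_group
begin

lemma mult_nat_pow_int_pow_trivial_iff:
  assumes x: "x \<in> carrier G" and y: "y \<in> carrier G"
    and disjoint: "generate G {x} \<inter> generate G {y} = {\<one>}" and "ord y dvd ord x"
  shows "(x \<otimes> y [^] (k::nat)) [^] (a::int) \<in> generate G {y} \<longleftrightarrow> x [^] a = \<one>"
    and "(x \<otimes> y [^] k) [^] a = \<one> \<longleftrightarrow> x [^] a = \<one>"
proof -
  have power: "(x \<otimes> y [^] k) [^] a = x [^] a \<otimes> y [^] (int k * a)"
    using x y by (simp add: int_pow_distrib int_pow_pow flip: int_pow_int)
  have sub_y: "subgroup (generate G {y}) G"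
    using y by (intro generate_is_subgroup) simp
  have "x [^] a = \<one>" if "(x \<otimes> y [^] k) [^] a \<in> generate G {y}"
  proof -
    have "inv (y [^] (int k * a)) \<in> generate G {y}"
      by (intro subgroup.m_inv_closed[OF sub_y] subgroup_int_pow_closed[OF sub_y] generate.incl) simp
    then have "(x \<otimes> y [^] k) [^] a \<otimes> inv (y [^] (int k * a)) \<in> generate G {y}"
      using that sub_y by (simp add: subgroup.m_closed)
    moreover have "(x \<otimes> y [^] k) [^] a \<otimes> inv (y [^] (int k * a)) = x [^] a"
      using x y by (simp add: power m_assoc)
    moreover have "x [^] a \<in> generate G {x}"
      using x by (intro subgroup_int_pow_closed[OF generate_is_subgroup] generate.incl) auto
    ultimately show ?thesis
      using disjoint by auto
  qed
  moreover have "(x \<otimes> y [^] k) [^] a = \<one>" if "x [^] a = \<one>"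
  proof -
    have "int (ord y) dvd a"
      using that \<open>ord y dvd ord x\<close> x by (auto simp: int_pow_eq_id elim: dvd_trans[rotated])
    then show ?thesis
      using that power y by (simp add: int_pow_eq_id)
  qed
  moreover have "\<one> \<in> generate G {y}"
    by (rule generate.one)
  ultimately show "(x \<otimes> y [^] k) [^] a \<in> generate G {y} \<longleftrightarrow> x [^] a = \<one>"
    and "(x \<otimes> y [^] k) [^] a = \<one> \<longleftrightarrow> x [^] a = \<one>"
    by auto
qed

lemma mult_nat_pow_complement:
  assumes x: "x \<in> carrier G" and y: "y \<in> carrier G"
    and "generate G {x} \<inter> generate G {y} = {\<one>}" and "ord y dvd ord x"
  shows "generate G {x \<otimes> y [^] (k::nat)} \<inter> generate G {y} = {\<one>}"
    and "ord (x \<otimes> y [^] k) = ord x"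
proof -
  note trivial_iff = mult_nat_pow_int_pow_trivial_iff[OF assms, of k]
  have x': "x \<otimes> y [^] k \<in> carrier G"
    using x y by simp
  show "generate G {x \<otimes> y [^] k} \<inter> generate G {y} = {\<one>}"
  proof
    show "generate G {x \<otimes> y [^] k} \<inter> generate G {y} \<subseteq> {\<one>}"
      using trivial_iff by (auto simp: generate_pow[OF x'])
  qed (auto intro: generate.one)
  have "(x \<otimes> y [^] k) [^] n = \<one> \<longleftrightarrow> x [^] n = \<one>" for n :: nat
    using trivial_iff(2)[of "int n"] by (simp add: int_pow_int)
  then show "ord (x \<otimes> y [^] k) = ord x"
    using ord_unique[OF x'] pow_eq_id[OF x] by simp
qed

end

lemma (in group) is_basis_mult_nat_pow:
  assumes basis: "is_basis G p n1 n2 b1 b2" and "n2 \<le> n1"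
  shows "is_basis G p n1 n2 (b1 \<otimes> b2 [^] (k::nat)) b2"
proof -
  let ?D = "comm_sub G"
  let ?Q = "G Mod ?D"
  interpret Q: comm_group ?Q
    by (rule derived_quot_is_comm_group)
  have hom: "(\<lambda>a. ?D #> a) \<in> hom G ?Q"
    by (rule normal.r_coset_hom_Mod[OF derived_is_normal[OF normal_self]])
  have b: "b1 \<in> carrier G" "b2 \<in> carrier G"
    using basis unfolding is_basis_def Let_def by auto
  have cosets: "?D #> b1 \<in> carrier ?Q" "?D #> b2 \<in> carrier ?Q"
    using b unfolding carrier_FactGroup by auto
  have "Q.ord (?D #> b2) dvd Q.ord (?D #> b1)"
    using basis \<open>n2 \<le> n1\<close> by (simp add: is_basis_def Let_def le_imp_power_dvd)
  note shift = Q.generate_mult_nat_pow_eq[OF cosets, of k]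
    Q.mult_nat_pow_complement[OF cosets _ this, of k]
  have "?D #> (b1 \<otimes> b2 [^] k) = (?D #> b1) \<otimes>\<^bsub>?Q\<^esub> (?D #> b2) [^]\<^bsub>?Q\<^esub> k"
    using hom_mult[OF hom b(1) nat_pow_closed[OF b(2)]] hom_nat_pow[OF hom b(2) is_group Q.is_group]
    by simp
  then show ?thesis
    using basis shift b by (simp add: is_basis_def Let_def)
qed

locale p_group_cyclic_derived = group G for G (structure) +
  fixes c :: 'a and p m :: nat
  assumes prime_p: "Factorial_Ring.prime p"
    and order_prime_power: "\<exists>k. order G = p ^ k"
    and c_derived: "c \<in> comm_sub G"
    and generate_c: "generate G {c} = comm_sub G"
    and card_derived: "card (comm_sub G) = p ^ m"
begin

definition conj_power :: "'a \<Rightarrow> nat \<Rightarrow> bool" where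
  "conj_power g e \<longleftrightarrow> g \<otimes> c \<otimes> inv g = c [^] e"

lemma derived_normal: "comm_sub G \<lhd> G"
  by (rule derived_is_normal[OF normal_self])

lemma c_carrier: "c \<in> carrier G"
  using c_derived derived_normal normal_imp_subgroup subgroup.subset by blast

lemma ord_c: "ord c = p ^ m"
  using generate_pow_card[OF c_carrier] generate_c card_derived by simp

lemma derived_eq_nat_powers: "comm_sub G = {c [^] k | k::nat. k \<in> UNIV}"
  using generate_pow_nat[OF c_carrier] ord_c prime_gt_0_nat[OF prime_p] generate_c by simp

lemma c_pow_eq_iff: "c [^] (a::nat) = c [^] (b::nat) \<longleftrightarrow> [a = b] (mod p ^ m)"
  using int_pow_eq[OF c_carrier, of "int a" "int b"] ord_c
  by (simp add: int_pow_int cong_iff_dvd_diff dvd_diff_commute flip: cong_int_iff)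

lemma conj_power_exists:
  assumes "g \<in> carrier G"
  obtains e where "conj_power g e"
  using normal.inv_op_closed2[OF derived_normal assms c_derived] derived_eq_nat_powers
  unfolding conj_power_def by blast

lemma conj_power_conj_c_pow:
  assumes "conj_power g e" "g \<in> carrier G"
  shows "g \<otimes> c [^] (n::nat) \<otimes> inv g = c [^] (e * n)"
proof (induction n)
  case (Suc n)
  have cancel: "inv g \<otimes> (g \<otimes> z) = z" if "z \<in> carrier G" for z
    using assms(2) that by (simp flip: m_assoc)
  have "g \<otimes> c [^] Suc n \<otimes> inv g = (g \<otimes> c [^] n \<otimes> inv g) \<otimes> (g \<otimes> c \<otimes> inv g)"
    using assms(2) c_carrier by (simp add: m_assoc cancel)
  also have "\<dots> = c [^] (e * Suc n)"
    using Suc assms c_carrier by (simp add: conj_power_def nat_pow_mult add.commute)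
  finally show ?case .
qed (use assms in simp)

lemma conj_power_mult:
  assumes "conj_power a e" "conj_power b e'" "a \<in> carrier G" "b \<in> carrier G"
  shows "conj_power (a \<otimes> b) (e * e')"
proof -
  have "a \<otimes> b \<otimes> c \<otimes> inv (a \<otimes> b) = a \<otimes> (b \<otimes> c \<otimes> inv b) \<otimes> inv a"
    using assms c_carrier by (simp add: inv_mult_group m_assoc)
  also have "\<dots> = c [^] (e * e')"
    using assms conj_power_conj_c_pow[OF assms(1,3)] by (simp add: conj_power_def)
  finally show ?thesis
    unfolding conj_power_def .
qed

lemma conj_power_one: "conj_power \<one> 1"
  using c_carrier by (simp add: conj_power_def)

lemma conj_power_nat_pow:
  assumes "conj_power g e" "g \<in> carrier G"
  shows "conj_power (g [^] (n::nat)) (e ^ n)"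
proof (induction n)
  case (Suc n)
  then show ?case
    using conj_power_mult[OF Suc assms(1) _ assms(2)] assms(2) by (simp add: mult.commute)
qed (use conj_power_one in simp)

lemma conj_power_iff_cong:
  assumes "conj_power g e"
  shows "conj_power g e' \<longleftrightarrow> [e = e'] (mod p ^ m)"
  using assms c_pow_eq_iff by (simp add: conj_power_def)

lemma conj_power_inv_cong:
  assumes "g \<in> carrier G" "conj_power g e" "conj_power (inv g) e'"
  shows "[e * e' = 1] (mod p ^ m)"
  using conj_power_mult[OF assms(2,3)] assms(1) conj_power_iff_cong[OF conj_power_one]
  by (simp add: cong_sym_eq)

lemma centralizer_iff_conj_power_1:
  assumes g: "g \<in> carrier G"
  shows "g \<in> centralizer G (comm_sub G) \<longleftrightarrow> conj_power g 1"
proof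
  assume "g \<in> centralizer G (comm_sub G)"
  then have "g \<otimes> c = c \<otimes> g"
    using c_derived unfolding centralizer_def by blast
  then show "conj_power g 1"
    using g c_carrier by (simp add: conj_power_def m_assoc)
next
  assume conj: "conj_power g 1"
  have "g \<otimes> h = h \<otimes> g" if "h \<in> comm_sub G" for h
  proof -
    obtain k :: nat where h: "h = c [^] k"
      using \<open>h \<in> comm_sub G\<close> derived_eq_nat_powers by blast
    then have "g \<otimes> h \<otimes> inv g = h"
      using conj_power_conj_c_pow[OF conj g, of k] by simp
    then have "g \<otimes> h \<otimes> inv g \<otimes> g = h \<otimes> g"
      by simp
    then show ?thesis
      using g h c_carrier by (simp add: m_assoc)
  qed
  then show "g \<in> centralizer G (comm_sub G)"
    unfolding centralizer_def using g by blast
qed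

lemma centralizer_normal: "centralizer G (comm_sub G) \<lhd> G"
proof -
  let ?C = "centralizer G (comm_sub G)"
  have C_iff: "h \<in> ?C \<longleftrightarrow> h \<in> carrier G \<and> conj_power h 1" for h
    using centralizer_iff_conj_power_1 unfolding centralizer_def by blast
  have inv_C: "inv h \<in> ?C" if h: "h \<in> ?C" for h
  proof -
    obtain e where "conj_power (inv h) e"
      using conj_power_exists[of "inv h"] h C_iff by auto
    then show ?thesis
      using conj_power_inv_cong[of h 1 e] conj_power_iff_cong h C_iff by auto
  qed
  have "subgroup ?C G"
    using C_iff inv_C conj_power_mult[of _ 1 _ 1] conj_power_one by (intro subgroupI) auto
  moreover have "x \<otimes> h \<otimes> inv x \<in> ?C" if x: "x \<in> carrier G" and h: "h \<in> ?C" for x h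
  proof -
    obtain e e' where e: "conj_power x e" and e': "conj_power (inv x) e'"
      using conj_power_exists x inv_closed by metis
    have h': "h \<in> carrier G" "conj_power h 1"
      using h C_iff by auto
    have "conj_power (x \<otimes> h \<otimes> inv x) (e * 1 * e')"
      using conj_power_mult[OF conj_power_mult[OF e h'(2) x h'(1)] e'] x h'(1) by simp
    then show ?thesis
      using conj_power_inv_cong[OF x e e'] conj_power_iff_cong x h C_iff by auto
  qed
  ultimately show ?thesis
    by (simp add: normal_inv_iff)
qed

text \<open>Inside the locale \<open>ord\<close> is the order of a group element; the multiplicative order
  modulo \<open>n\<close> is \<open>Pocklington.ord n\<close>.\<close>

lemma ord_centralizer_coset:
  assumes g: "g \<in> carrier G" and e: "conj_power g e"
  shows "group.ord (G Mod centralizer G (comm_sub G)) (centralizer G (comm_sub G) #> g)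
    = Pocklington.ord (p ^ m) e"
proof -
  let ?C = "centralizer G (comm_sub G)"
  interpret Q: group "G Mod ?C"
    by (rule normal.factorgroup_is_group[OF centralizer_normal])
  have sub_C: "subgroup ?C G"
    using centralizer_normal normal_imp_subgroup by blast
  have "Q.ord (?C #> g) dvd n \<longleftrightarrow> Pocklington.ord (p ^ m) e dvd n" for n
  proof -
    have "(?C #> g) [^]\<^bsub>G Mod ?C\<^esub> n = ?C #> (g [^] n)"
      using hom_nat_pow[OF normal.r_coset_hom_Mod[OF centralizer_normal] g is_group Q.is_group]
      by simp
    moreover have "?C #> (g [^] n) = ?C \<longleftrightarrow> g [^] n \<in> ?C"
      using coset_join1[of ?C "g [^] n"] coset_join2[of "g [^] n" ?C] g sub_C by auto
    moreover have "g [^] n \<in> ?C \<longleftrightarrow> [e ^ n = 1] (mod p ^ m)"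
      using centralizer_iff_conj_power_1[of "g [^] n"] conj_power_iff_cong[OF conj_power_nat_pow[OF e g]] g
      by simp
    moreover have "Q.ord (?C #> g) dvd n \<longleftrightarrow> (?C #> g) [^]\<^bsub>G Mod ?C\<^esub> n = \<one>\<^bsub>G Mod ?C\<^esub>"
      using g by (intro Q.pow_eq_id[symmetric]) (auto simp: carrier_FactGroup)
    ultimately show ?thesis
      by (simp add: ord_divides')
  qed
  then show ?thesis
    by (meson dvd_antisym dvd_refl)
qed

lemma conj_power_cong_1_exists:
  assumes g: "g \<in> carrier G"
  obtains e where "conj_power g e" and "[e = 1] (mod p)"
proof -
  obtain e where e: "conj_power g e"
    using conj_power_exists[OF g] .
  show ?thesis
  proof (cases "m = 0")
    case True
    then show ?thesis
      using that e conj_power_iff_cong[OF e, of 1] by simp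
  next
    case False
    obtain k where k: "order G = p ^ k"
      using order_prime_power by blast
    have "conj_power \<one> (e ^ order G)"
      using conj_power_nat_pow[OF e g, of "order G"] pow_order_eq_1[OF g] by simp
    then have "[e ^ p ^ k = 1] (mod p ^ m)"
      using conj_power_iff_cong[OF conj_power_one] k by (simp add: cong_sym_eq)
    then have "[e ^ p ^ k = 1] (mod p)"
      using False by (elim cong_dvd_modulus_nat) simp
    then show ?thesis
      using that e cong_1_of_power_prime_power_cong_1[OF prime_p] by blast
  qed
qed

lemma o_exp_conj_power:
  assumes "odd p" and g: "g \<in> carrier G" and e: "conj_power g e" "[e = 1] (mod p)"
  shows "Pocklington.ord (p ^ m) e = p ^ o_exp G p g" and "o_exp G p g \<le> m - 1"
proof -
  obtain a where a: "Pocklington.ord (p ^ m) e = p ^ a" "a \<le> m - 1"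
    using ord_prime_power_eq_prime_power[OF prime_p \<open>odd p\<close> e(2)] .
  have "o_exp G p g = (THE k. p ^ k = p ^ a)"
    unfolding o_exp_def ord_centralizer_coset[OF g e(1)] a(1) ..
  also have "\<dots> = a"
    using prime_gt_1_nat[OF prime_p] by (intro the_equality) (auto simp: power_inject_exp)
  finally show "Pocklington.ord (p ^ m) e = p ^ o_exp G p g" and "o_exp G p g \<le> m - 1"
    using a by simp_all
qed

lemma o_exp_le:
  assumes "odd p" and "g \<in> carrier G"
  shows "o_exp G p g \<le> m - 1"
  using conj_power_cong_1_exists[OF assms(2)] o_exp_conj_power(2)[OF assms] by metis

lemma o_exp_le_of_minimal_basis:
  assumes "odd p" and "n2 \<le> n1"
    and basis: "is_basis G p n1 n2 b1 b2" "o_exp G p b1 = o1" "o_exp G p b2 = o2"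
    and minimal: "\<forall>b1 b2. is_basis G p n1 n2 b1 b2 \<longrightarrow>
      o1 < o_exp G p b1 \<or> (o1 = o_exp G p b1 \<and> o2 \<le> o_exp G p b2)"
    and "o1 \<noteq> 0"
  shows "o2 \<le> o1"
proof (rule ccontr)
  assume "\<not> o2 \<le> o1"
  have b: "b1 \<in> carrier G" "b2 \<in> carrier G"
    using basis unfolding is_basis_def Let_def by auto
  obtain e1 where e1: "conj_power b1 e1" "[e1 = 1] (mod p)"
    using conj_power_cong_1_exists[OF b(1)] .
  obtain e2 where e2: "conj_power b2 e2" "[e2 = 1] (mod p)"
    using conj_power_cong_1_exists[OF b(2)] .
  have "Pocklington.ord (p ^ m) e1 dvd Pocklington.ord (p ^ m) e2"
    using o_exp_conj_power(1)[OF \<open>odd p\<close> b(1) e1] o_exp_conj_power(1)[OF \<open>odd p\<close> b(2) e2]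
      basis \<open>\<not> o2 \<le> o1\<close> by (simp add: le_imp_power_dvd)
  then obtain k where "[e1 * e2 ^ k = 1] (mod p ^ m)"
    using mult_power_cong_1_of_ord_dvd[OF prime_p \<open>odd p\<close> e1(2) e2(2)] by blast
  moreover have "conj_power (b1 \<otimes> b2 [^] k) (e1 * e2 ^ k)"
    using conj_power_mult[OF e1(1) conj_power_nat_pow[OF e2(1) b(2)]] b by simp
  ultimately have "conj_power (b1 \<otimes> b2 [^] k) 1"
    using conj_power_iff_cong by blast
  then have "p ^ o_exp G p (b1 \<otimes> b2 [^] k) = 1"
    using o_exp_conj_power(1)[of "b1 \<otimes> b2 [^] k" 1] \<open>odd p\<close> b by simp
  then have "o_exp G p (b1 \<otimes> b2 [^] k) = 0"
    using prime_gt_1_nat[OF prime_p] by (simp add: power_eq_1_iff)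
  moreover have "is_basis G p n1 n2 (b1 \<otimes> b2 [^] k) b2"
    using is_basis_mult_nat_pow[OF basis(1) \<open>n2 \<le> n1\<close>] .
  ultimately show False
    using minimal \<open>o1 \<noteq> 0\<close> by fastforce
qed

end


theorem lemma3p6:
  fixes G :: "('a, 'b) monoid_scheme" and p m n1 n2 o1 o2 \<delta>1 \<delta>2 :: nat and r1 r2 :: int
  assumes "Factorial_Ring.prime p" and "odd p"
    and "group G" and "finite (carrier G)" and "\<exists>k. order G = p ^ k"
    and "\<not> comm_group G"
    and "\<exists>a\<in>carrier G. \<exists>b\<in>carrier G. generate G {a, b} = carrier G"
    and "\<exists>c\<in>comm_sub G. generate G {c} = comm_sub G"
    and "card (comm_sub G) = p ^ m"
    and "G Mod (comm_sub G) \<cong> DirProd (integer_mod_group (p ^ n1)) (integer_mod_group (p ^ n2))"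
    and "n1 \<ge> n2" and "n2 \<ge> 1"
    and "\<exists>b1 b2. is_basis G p n1 n2 b1 b2 \<and> o_exp G p b1 = o1 \<and> o_exp G p b2 = o2"
    and "\<forall>b1 b2. is_basis G p n1 n2 b1 b2 \<longrightarrow>
           o1 < o_exp G p b1 \<or> (o1 = o_exp G p b1 \<and> o2 \<le> o_exp G p b2)"
    and "r1 = 1 + int p ^ (m - o1)"
    and "r2 = (if o2 > o1 then 1 + int p ^ (m - o2) else r1 ^ (p ^ (o1 - o2)))"
    and "1 \<le> \<delta>1" and "\<delta>1 \<le> p ^ o1" and "1 \<le> \<delta>2" and "\<delta>2 \<le> p ^ o2"
    and "[S_sum r2 (\<delta>1 * p ^ (m - o1)) = 1 - r1] (mod int p ^ m)"
    and "[S_sum r1 (\<delta>2 * p ^ (m - o2)) * r2 ^ (\<delta>1 * p ^ (m - o1)) = r2 - 1] (mod int p ^ m)"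
  shows "(o1 = 0 \<longrightarrow> \<delta>1 = 1 \<and> \<delta>2 = 1) \<and> (o1 \<noteq> 0 \<longrightarrow> [\<delta>1 + \<delta>2 = 0] (mod p ^ o2))"
proof -
  obtain c where "c \<in> comm_sub G" "generate G {c} = comm_sub G"
    using assms(8) by blast
  then interpret p_group_cyclic_derived G c p m
    using assms(1,3,5,9)
    by (simp add: p_group_cyclic_derived_def p_group_cyclic_derived_axioms_def)
  obtain b1 b2 where basis: "is_basis G p n1 n2 b1 b2" "o_exp G p b1 = o1" "o_exp G p b2 = o2"
    using assms(13) by blast
  then have "o1 \<le> m - 1" "o2 \<le> m - 1"
    using o_exp_le[OF assms(2)] unfolding is_basis_def Let_def by auto
  moreover have "o1 \<noteq> 0 \<Longrightarrow> o2 \<le> o1"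
    using o_exp_le_of_minimal_basis[OF assms(2,11) basis assms(14)] .
  ultimately show ?thesis
    using deltas_of_S_sum_congs[OF assms(1,2)] assms(15-22) by blast
qed

end
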